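(* Let $G=(V,E)$ be a vertex-color-avoiding connected graph on $n\ge 2$ vertices such that $G-e$ is not vertex-color-avoiding connected for any $e\in E$. Then $|E|\le 2n-3$, and if the vertices are colored with exactly $k=3$ colors, this upper bound is sharp (attained by suitable such graphs). Moreover, if the vertices are colored with exactly $k=1$ or $k=2$ colors, then $|E|=n-1$.
   Context: Vertex-colorings are arbitrary (not necessarily proper). Two vertices $u,v$ are vertex-$c$-avoiding connected (for a color $c$) if there is a $u$-$v$ path and either at least one of $u,v$ has color $c$ or some $u$-$v$ path contains no vertex of color $c$. A graph is vertex-color-avoiding connected if any two vertices are vertex-$c$-avoiding connected for every color $c$. $G-e$ denotes $G$ with edge $e$ removed. *)

theory Defs
  imports Main
begin

definition simple_graph :: "'a set \<Rightarrow> 'a set set \<Rightarrow> bool" where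
  "simple_graph V E \<longleftrightarrow> finite V \<and> (\<forall>e\<in>E. e \<subseteq> V \<and> card e = 2)"

definition path_within :: "'a set set \<Rightarrow> 'a set \<Rightarrow> 'a \<Rightarrow> 'a \<Rightarrow> bool" where
  "path_within E S u v \<longleftrightarrow> (\<exists>p. p \<noteq> [] \<and> hd p = u \<and> last p = v \<and> distinct p \<and> set p \<subseteq> S \<and>
      (\<forall>i. Suc i < length p \<longrightarrow> {p ! i, p ! Suc i} \<in> E))"

definition vertex_c_avoiding_connected ::
  "'a set \<Rightarrow> 'a set set \<Rightarrow> ('a \<Rightarrow> 'b) \<Rightarrow> 'b \<Rightarrow> 'a \<Rightarrow> 'a \<Rightarrow> bool" where
  "vertex_c_avoiding_connected V E col c u v \<longleftrightarrow>
     path_within E V u v \<and>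
     (col u = c \<or> col v = c \<or> path_within E {w \<in> V. col w \<noteq> c} u v)"

definition vca_connected :: "'a set \<Rightarrow> 'a set set \<Rightarrow> ('a \<Rightarrow> 'b) \<Rightarrow> bool" where
  "vca_connected V E col \<longleftrightarrow>
     (\<forall>u\<in>V. \<forall>v\<in>V. \<forall>c. vertex_c_avoiding_connected V E col c u v)"

definition minimal_vca_connected :: "'a set \<Rightarrow> 'a set set \<Rightarrow> ('a \<Rightarrow> 'b) \<Rightarrow> bool" where
  "minimal_vca_connected V E col \<longleftrightarrow>
     vca_connected V E col \<and> (\<forall>e\<in>E. \<not> vca_connected V (E - {e}) col)"

end

theory Submission
  imports Defs
begin

(* Write r_T(F) for the rank of an edge set F in the graphic matroid on a vertex set T, i.e. |T|
   minus the number of components of the graph on T formed by the edges of F inside T, and V - c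
   for the set of vertices not coloured c. Minimality says that every edge xy is a bridge of G or
   of some G[V - c] containing x and y. Adding the edges of G one at a time, the potential
     sum_c r_(V - c)(F) - (k - 3) r_V(F)
   therefore grows by at least one per edge: an edge joining two components of V also joins two
   components of each of the at least k - 2 graphs G[V - c] with c not a colour of its ends, and
   any other edge is a bridge of some G[V - c]. For F = E all these graphs are connected, so
   |E| <= sum_c (|V - c| - 1) - (k - 3)(n - 1) = 2n - 3.
   With one colour every edge is a bridge of G. With two colours every edge inside a colour class
   is a bridge of that connected class and at most one edge joins the two classes, so G is a tree.
   The bound is attained by K_(1,1,n-2) coloured by its three parts. *)

section \<open>Connectivity inside a vertex set\<close>

definition adj_in :: "'a set set \<Rightarrow> 'a set \<Rightarrow> 'a \<Rightarrow> 'a \<Rightarrow> bool" where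
  "adj_in E T a b \<longleftrightarrow> {a, b} \<in> E \<and> a \<in> T \<and> b \<in> T"

abbreviation reach_in :: "'a set set \<Rightarrow> 'a set \<Rightarrow> 'a \<Rightarrow> 'a \<Rightarrow> bool" where
  "reach_in E T \<equiv> (adj_in E T)\<^sup>*\<^sup>*"

lemma adj_in_sym: "adj_in E T a b \<Longrightarrow> adj_in E T b a"
  by (auto simp: adj_in_def insert_commute)

lemma reach_in_sym: "reach_in E T a b \<Longrightarrow> reach_in E T b a"
  by (induction rule: rtranclp_induct)
     (auto intro: converse_rtranclp_into_rtranclp adj_in_sym)

lemma reach_in_mono:
  assumes "E \<subseteq> E'" "T \<subseteq> T'" "reach_in E T a b"
  shows "reach_in E' T' a b"
proof -
  have "adj_in E T \<le> adj_in E' T'"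
    using assms(1,2) by (auto simp: adj_in_def)
  then show ?thesis
    using assms(3) rtranclp_mono by blast
qed

lemma reach_in_cong:
  assumes "\<And>a b. a \<in> T \<Longrightarrow> b \<in> T \<Longrightarrow> {a, b} \<in> E \<longleftrightarrow> {a, b} \<in> E'"
  shows "reach_in E T = reach_in E' T"
proof -
  have "adj_in E T = adj_in E' T"
    using assms by (auto simp: adj_in_def fun_eq_iff)
  then show ?thesis by simp
qed

lemma reach_in_from_isolated:
  assumes "reach_in E T x y" "\<And>z. \<not> adj_in E T x z"
  shows "y = x"
  using assms by (auto elim: converse_rtranclpE)

lemma reach_in_hub:
  assumes "h \<in> T" "\<And>w. w \<in> T \<Longrightarrow> w \<noteq> h \<Longrightarrow> {h, w} \<in> E" "u \<in> T" "v \<in> T"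
  shows "reach_in E T u v"
proof -
  have "reach_in E T h w" if "w \<in> T" for w
    using assms(1,2) that by (cases "w = h") (auto simp: adj_in_def)
  then show ?thesis
    using assms(3,4) by (meson reach_in_sym rtranclp_trans)
qed

lemma reach_in_if_path_within:
  assumes "path_within E S u v"
  shows "reach_in E S u v"
proof -
  obtain p where p: "p \<noteq> []" "hd p = u" "last p = v" "set p \<subseteq> S"
    "\<And>i. Suc i < length p \<Longrightarrow> {p ! i, p ! Suc i} \<in> E"
    using assms unfolding path_within_def by blast
  have "reach_in E S u (p ! i)" if "i < length p" for i
    using that
  proof (induction i)
    case 0
    then show ?case
      using p by (simp add: hd_conv_nth)
  next
    case (Suc i)
    then have "adj_in E S (p ! i) (p ! Suc i)"
      using p unfolding adj_in_def by (meson Suc_lessD nth_mem subsetD)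
    then show ?case
      using Suc by (meson Suc_lessD rtranclp.rtrancl_into_rtrancl)
  qed
  from this[of "length p - 1"] show ?thesis
    using p by (simp add: last_conv_nth)
qed

lemma path_within_if_reach_in:
  assumes "reach_in E S u v" "u \<in> S"
  shows "path_within E S u v"
  using assms(1)
proof (induction rule: rtranclp_induct)
  case base
  show ?case
    unfolding path_within_def using assms(2) by (intro exI[of _ "[u]"]) auto
next
  case (step a b)
  obtain p where p: "p \<noteq> []" "hd p = u" "last p = a" "distinct p" "set p \<subseteq> S"
    "\<And>i. Suc i < length p \<Longrightarrow> {p ! i, p ! Suc i} \<in> E"
    using step.IH unfolding path_within_def by blast
  have ab: "{a, b} \<in> E" "b \<in> S"
    using step.hyps(2) unfolding adj_in_def by auto
  show ?case
  proof (cases "b \<in> set p")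
    case True
    then obtain j where j: "j < length p" "p ! j = b"
      by (meson in_set_conv_nth)
    have "last (take (Suc j) p) = b"
      using j by (simp add: take_Suc_conv_app_nth)
    then show ?thesis
      unfolding path_within_def using p j
      by (intro exI[of _ "take (Suc j) p"]) (auto dest: in_set_takeD)
  next
    case False
    have "{(p @ [b]) ! i, (p @ [b]) ! Suc i} \<in> E" if "Suc i < length (p @ [b])" for i
    proof (cases "Suc i < length p")
      case False
      then have "i = length p - 1"
        using that by simp
      then show ?thesis
        using p ab by (simp add: nth_append last_conv_nth)
    qed (use p in \<open>simp add: nth_append\<close>)
    then show ?thesis
      unfolding path_within_def using p ab False
      by (intro exI[of _ "p @ [b]"]) auto
  qed
qed

lemma path_within_iff_reach_in: "u \<in> S \<Longrightarrow> path_within E S u v \<longleftrightarrow> reach_in E S u v"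
  by (rule iffI[OF reach_in_if_path_within path_within_if_reach_in])

section \<open>Components and graphic rank\<close>

definition component_in :: "'a set set \<Rightarrow> 'a set \<Rightarrow> 'a \<Rightarrow> 'a set" where
  "component_in E T x = {y. reach_in E T x y}"

definition components_in :: "'a set set \<Rightarrow> 'a set \<Rightarrow> 'a set set" where
  "components_in E T = component_in E T ` T"

lemma component_in_eq_iff: "component_in E T x = component_in E T z \<longleftrightarrow> reach_in E T x z"
proof
  assume eq: "component_in E T x = component_in E T z"
  have "z \<in> component_in E T z"
    by (simp add: component_in_def)
  then have "z \<in> component_in E T x"
    using eq by simp
  then show "reach_in E T x z"
    by (simp add: component_in_def)
next
  assume "reach_in E T x z"
  then show "component_in E T x = component_in E T z"
    unfolding component_in_def by (blast intro: rtranclp_trans reach_in_sym)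
qed

lemma card_components_in_empty: "card (components_in {} T) = card T"
proof -
  have "component_in {} T x = {x}" for x
    unfolding component_in_def
    by (auto dest: reach_in_from_isolated simp: adj_in_def)
  then show ?thesis
    by (simp add: components_in_def card_image inj_on_def)
qed

lemma card_components_in_le: "finite T \<Longrightarrow> card (components_in E T) \<le> card T"
  by (simp add: components_in_def card_image_le)

lemma card_components_in_le_card:
  assumes "finite R" "\<And>t. t \<in> T \<Longrightarrow> \<exists>r\<in>R. reach_in E T t r"
  shows "card (components_in E T) \<le> card R"
proof -
  have "components_in E T \<subseteq> component_in E T ` R"
  proof
    fix C assume "C \<in> components_in E T"
    then obtain t where "t \<in> T" "C = component_in E T t"
      by (auto simp: components_in_def)
    with assms(2) obtain r where "r \<in> R" "C = component_in E T r"
      by (metis component_in_eq_iff)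
    then show "C \<in> component_in E T ` R" by blast
  qed
  then show ?thesis
    using assms(1) by (meson card_image_le card_mono finite_imageI le_trans)
qed

lemma card_components_in_connected:
  assumes "T \<noteq> {}" "\<And>u v. u \<in> T \<Longrightarrow> v \<in> T \<Longrightarrow> reach_in E T u v"
  shows "card (components_in E T) = 1"
proof -
  obtain t where t: "t \<in> T"
    using assms(1) by blast
  have "component_in E T s = component_in E T t" if "s \<in> T" for s
    using assms(2)[OF that t] by (simp add: component_in_eq_iff)
  then have "components_in E T = (\<lambda>_. component_in E T t) ` T"
    unfolding components_in_def by (rule image_cong[OF refl])
  then show ?thesis
    using assms(1) by (simp add: image_constant_conv)
qed

definition joins :: "'a set set \<Rightarrow> 'a set \<Rightarrow> 'a \<Rightarrow> 'a \<Rightarrow> bool" where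
  "joins E T x y \<longleftrightarrow> x \<in> T \<and> y \<in> T \<and> \<not> reach_in E T x y"

lemma reach_in_insert_edge:
  assumes "x \<in> T" "y \<in> T"
  shows "reach_in (insert {x, y} F) T a b \<longleftrightarrow>
    reach_in F T a b \<or> (reach_in F T a x \<and> reach_in F T y b) \<or> (reach_in F T a y \<and> reach_in F T x b)"
    (is "?lhs \<longleftrightarrow> ?rhs")
proof
  assume ?lhs
  then show ?rhs
  proof (induction rule: rtranclp_induct)
    case (step b c)
    show ?case
    proof (cases "adj_in F T b c")
      case True
      then show ?thesis
        using step.IH by (meson rtranclp.rtrancl_into_rtrancl)
    next
      case False
      then have "(b = x \<and> c = y) \<or> (b = y \<and> c = x)"
        using step.hyps(2) by (auto simp: adj_in_def doubleton_eq_iff)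
      then show ?thesis
        using step.IH by (metis reach_in_sym rtranclp.rtrancl_refl rtranclp_trans)
    qed
  qed simp
next
  have "adj_in (insert {x, y} F) T x y" "adj_in (insert {x, y} F) T y x"
    using assms by (auto simp: adj_in_def insert_commute)
  moreover have "reach_in F T a b \<Longrightarrow> reach_in (insert {x, y} F) T a b" for a b
    by (rule reach_in_mono[of F _ T]) auto
  moreover assume ?rhs
  ultimately show ?lhs
    by (meson r_into_rtranclp rtranclp_trans)
qed

lemma reach_in_insert_edge_same:
  assumes "\<not> joins F T x y"
  shows "reach_in (insert {x, y} F) T = reach_in F T"
proof (cases "x \<in> T \<and> y \<in> T")
  case True
  then have xy: "reach_in F T x y"
    using assms by (simp add: joins_def)
  have yx: "reach_in F T y x"
    using xy by (rule reach_in_sym)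
  have "reach_in (insert {x, y} F) T a b \<longleftrightarrow> reach_in F T a b" for a b
    unfolding reach_in_insert_edge[OF conjunct1[OF True] conjunct2[OF True]]
    by (meson xy yx rtranclp_trans)
  then show ?thesis by blast
next
  case False
  then have "adj_in (insert {x, y} F) T = adj_in F T"
    by (auto simp: adj_in_def fun_eq_iff doubleton_eq_iff)
  then show ?thesis by simp
qed

lemma components_in_insert_joining_edge:
  assumes "joins F T x y"
  defines "cx \<equiv> component_in F T x" and "cy \<equiv> component_in F T y"
  shows "components_in (insert {x, y} F) T = insert (cx \<union> cy) (components_in F T - {cx, cy})"
proof -
  have xy: "x \<in> T" "y \<in> T" "\<not> reach_in F T x y"
    using assms(1) by (auto simp: joins_def)
  note reach' = reach_in_insert_edge[OF xy(1,2)]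
  have merged: "component_in (insert {x, y} F) T z = cx \<union> cy"
    if "reach_in F T z x \<or> reach_in F T z y" for z
  proof -
    have "reach_in (insert {x, y} F) T z w \<longleftrightarrow> reach_in F T x w \<or> reach_in F T y w" for w
      unfolding reach' using that xy(3) by (meson reach_in_sym rtranclp_trans)
    then show ?thesis
      by (auto simp: cx_def cy_def component_in_def)
  qed
  have unchanged: "component_in (insert {x, y} F) T z = component_in F T z"
    if "\<not> reach_in F T z x" "\<not> reach_in F T z y" for z
    using that unfolding component_in_def reach' by blast
  have other: "component_in F T z \<notin> {cx, cy} \<longleftrightarrow> \<not> reach_in F T z x \<and> \<not> reach_in F T z y" for z
    by (auto simp: cx_def cy_def component_in_eq_iff dest: reach_in_sym)
  show ?thesis
  proof (intro equalityI subsetI)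
    fix C assume "C \<in> components_in (insert {x, y} F) T"
    then obtain z where "z \<in> T" "C = component_in (insert {x, y} F) T z"
      by (auto simp: components_in_def)
    then show "C \<in> insert (cx \<union> cy) (components_in F T - {cx, cy})"
      using merged[of z] unchanged[of z] other[of z]
      by (cases "reach_in F T z x \<or> reach_in F T z y") (auto simp: components_in_def)
  next
    fix C assume C: "C \<in> insert (cx \<union> cy) (components_in F T - {cx, cy})"
    show "C \<in> components_in (insert {x, y} F) T"
    proof (cases "C = cx \<union> cy")
      case True
      then show ?thesis
        using merged[of x] xy(1) by (auto simp: components_in_def)
    next
      case False
      then obtain z where "z \<in> T" "C = component_in F T z" "C \<notin> {cx, cy}"
        using C by (auto simp: components_in_def)
      then show ?thesis
        using unchanged other by (auto simp: components_in_def)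
    qed
  qed
qed

lemma card_components_in_insert_edge:
  assumes "finite T"
  shows "card (components_in F T) = card (components_in (insert {x, y} F) T) + of_bool (joins F T x y)"
proof (cases "joins F T x y")
  case True
  define cx where "cx = component_in F T x"
  define cy where "cy = component_in F T y"
  have C: "cx \<in> components_in F T" "cy \<in> components_in F T" "cx \<noteq> cy"
    using True by (auto simp: components_in_def joins_def cx_def cy_def component_in_eq_iff)
  have "cx \<union> cy \<notin> components_in F T"
  proof
    assume "cx \<union> cy \<in> components_in F T"
    then obtain z where z: "cx \<union> cy = component_in F T z"
      by (auto simp: components_in_def)
    have "x \<in> cx \<union> cy" "y \<in> cx \<union> cy"
      by (simp_all add: cx_def cy_def component_in_def)
    then have "reach_in F T z x" "reach_in F T z y"
      unfolding z by (simp_all add: component_in_def)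
    then have "reach_in F T x y"
      by (meson reach_in_sym rtranclp_trans)
    with True show False
      by (simp add: joins_def)
  qed
  moreover have "finite (components_in F T)"
    using assms by (simp add: components_in_def)
  moreover have "card {cx, cy} \<le> card (components_in F T)"
    using C calculation(2) by (intro card_mono) auto
  ultimately show ?thesis
    using True C components_in_insert_joining_edge[OF True]
    by (simp add: cx_def cy_def card_Diff_subset)
next
  case False
  then show ?thesis
    by (simp add: components_in_def component_in_def reach_in_insert_edge_same)
qed

lemma joins_mono:
  assumes "joins F T x y" "F' \<subseteq> F" "T' \<subseteq> T" "x \<in> T'" "y \<in> T'"
  shows "joins F' T' x y"
  using assms reach_in_mono[of F' F T' T x y] by (auto simp: joins_def)

lemma joins_if_reach_in_lost:
  assumes "reach_in E T u v" "\<not> reach_in (E - {{x, y}}) T u v"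
  shows "joins (E - {{x, y}}) T x y"
proof (rule ccontr)
  assume "\<not> joins (E - {{x, y}}) T x y"
  then have eq: "reach_in (insert {x, y} (E - {{x, y}})) T = reach_in (E - {{x, y}}) T"
    by (rule reach_in_insert_edge_same)
  have "reach_in (insert {x, y} (E - {{x, y}})) T u v"
    using assms(1) by (rule reach_in_mono[rotated 2]) auto
  then show False
    using assms(2) unfolding eq by blast
qed

definition graphic_rank :: "'a set set \<Rightarrow> 'a set \<Rightarrow> nat" where
  "graphic_rank E T = card T - card (components_in E T)"

lemma graphic_rank_empty [simp]: "graphic_rank {} T = 0"
  by (simp add: graphic_rank_def card_components_in_empty)

lemma graphic_rank_insert_edge:
  "finite T \<Longrightarrow> graphic_rank (insert {x, y} F) T = graphic_rank F T + of_bool (joins F T x y)"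
  using card_components_in_insert_edge[of T F x y] card_components_in_le[of T F]
  by (simp add: graphic_rank_def)

lemma graphic_rank_connected:
  "T \<noteq> {} \<Longrightarrow> (\<And>u v. u \<in> T \<Longrightarrow> v \<in> T \<Longrightarrow> reach_in E T u v) \<Longrightarrow> graphic_rank E T = card T - 1"
  by (simp add: graphic_rank_def card_components_in_connected)

lemma graphic_rank_cong:
  assumes "\<And>a b. a \<in> T \<Longrightarrow> b \<in> T \<Longrightarrow> {a, b} \<in> E \<longleftrightarrow> {a, b} \<in> E'"
  shows "graphic_rank E T = graphic_rank E' T"
proof -
  have "reach_in E T = reach_in E' T"
    using assms by (rule reach_in_cong)
  then show ?thesis
    by (simp add: graphic_rank_def components_in_def component_in_def)
qed

lemma graphic_rank_le_card:
  assumes "finite T" "finite F" "\<forall>e\<in>F. \<exists>x y. e = {x, y}"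
  shows "graphic_rank F T \<le> card F"
  using assms(2,3)
proof (induction F rule: finite_induct)
  case (insert e F)
  then obtain x y where "e = {x, y}"
    by blast
  then show ?case
    using insert assms(1) by (simp add: graphic_rank_insert_edge)
qed simp

lemma graphic_rank_add_bridges:
  assumes "finite T" "finite G" "G \<subseteq> E" "F \<subseteq> E - G"
    and bridge: "\<And>e. e \<in> G \<Longrightarrow> \<exists>x y. e = {x, y} \<and> joins (E - {e}) T x y"
  shows "graphic_rank (F \<union> G) T = graphic_rank F T + card G"
  using assms(2,3,4) bridge
proof (induction G rule: finite_induct)
  case (insert e G)
  obtain x y where e: "e = {x, y}" "joins (E - {e}) T x y"
    using insert.prems(3) by blast
  have "F \<union> G \<subseteq> E - {e}"
    using insert.prems(1,2) insert.hyps(2) by auto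
  moreover have "x \<in> T" "y \<in> T"
    using e(2) by (simp_all add: joins_def)
  ultimately have "joins (F \<union> G) T x y"
    using joins_mono[OF e(2)] by blast
  then have "graphic_rank (F \<union> insert e G) T = graphic_rank (F \<union> G) T + 1"
    using graphic_rank_insert_edge[OF assms(1), of x y "F \<union> G"] e(1) by simp
  moreover have "graphic_rank (F \<union> G) T = graphic_rank F T + card G"
    using insert.IH insert.prems by blast
  ultimately show ?case
    using insert.hyps by simp
qed simp

lemma graphic_rank_two_parts:
  assumes "A \<union> B = V" "a \<in> A" "b \<in> B"
    and "\<And>u v. u \<in> A \<Longrightarrow> v \<in> A \<Longrightarrow> reach_in E A u v"
    and "\<And>u v. u \<in> B \<Longrightarrow> v \<in> B \<Longrightarrow> reach_in E B u v"
  shows "card V - 2 \<le> graphic_rank ({e \<in> E. e \<subseteq> A} \<union> {e \<in> E. e \<subseteq> B}) V"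
proof -
  let ?F = "{e \<in> E. e \<subseteq> A} \<union> {e \<in> E. e \<subseteq> B}"
  have eqs: "reach_in {e \<in> E. e \<subseteq> A} A = reach_in E A" "reach_in {e \<in> E. e \<subseteq> B} B = reach_in E B"
    by (auto intro!: reach_in_cong)
  have "reach_in {e \<in> E. e \<subseteq> A} A w a \<or> reach_in {e \<in> E. e \<subseteq> B} B w b" if "w \<in> V" for w
  proof -
    have "w \<in> A \<or> w \<in> B"
      using that assms(1) by blast
    then show ?thesis
      using assms(2-5) eqs by auto
  qed
  moreover have "reach_in ?F V w r"
    if "reach_in {e \<in> E. e \<subseteq> A} A w r \<or> reach_in {e \<in> E. e \<subseteq> B} B w r" for w r
    using that assms(1) reach_in_mono[of "{e \<in> E. e \<subseteq> A}" ?F A V w r]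
      reach_in_mono[of "{e \<in> E. e \<subseteq> B}" ?F B V w r] by auto
  ultimately have "\<exists>r\<in>{a, b}. reach_in ?F V w r" if "w \<in> V" for w
    using that by blast
  then have "card (components_in ?F V) \<le> card {a, b}"
    by (intro card_components_in_le_card) auto
  then show ?thesis
    unfolding graphic_rank_def by (simp add: card_insert_if split: if_splits)
qed

lemma simple_graph_edge:
  assumes "simple_graph V E" "e \<in> E"
  obtains x y where "e = {x, y}" "x \<noteq> y" "x \<in> V" "y \<in> V"
proof -
  have "e \<subseteq> V" "card e = 2"
    using assms unfolding simple_graph_def by auto
  then show ?thesis
    using that by (auto simp: card_2_iff)
qed

lemma simple_graph_finite_edges: "simple_graph V E \<Longrightarrow> finite E"
  unfolding simple_graph_def by (meson Pow_iff finite_Pow_iff finite_subset subsetI)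

lemma card_edges_ge_if_connected:
  assumes "simple_graph V E" "V \<noteq> {}" "\<And>u v. u \<in> V \<Longrightarrow> v \<in> V \<Longrightarrow> reach_in E V u v"
  shows "card V \<le> card E + 1"
proof -
  have "\<forall>e\<in>E. \<exists>x y. e = {x, y}"
  proof
    fix e assume "e \<in> E"
    then obtain x y where "e = {x, y}"
      by (rule simple_graph_edge[OF assms(1)])
    then show "\<exists>x y. e = {x, y}"
      by blast
  qed
  then have "graphic_rank E V \<le> card E"
    using assms(1) simple_graph_finite_edges by (intro graphic_rank_le_card) (auto simp: simple_graph_def)
  moreover have "graphic_rank E V = card V - 1"
    using assms(2,3) by (rule graphic_rank_connected)
  ultimately show ?thesis
    by simp
qed

section \<open>Colour-avoiding connectivity and its minimality\<close>

abbreviation avoiding :: "'a set \<Rightarrow> ('a \<Rightarrow> 'b) \<Rightarrow> 'b \<Rightarrow> 'a set" where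
  "avoiding V col c \<equiv> {w \<in> V. col w \<noteq> c}"

lemma sum_card_avoiding:
  assumes "finite V"
  shows "(\<Sum>c\<in>col ` V. card (avoiding V col c)) = (card (col ` V) - 1) * card V"
proof (rule sum_multicount)
  have "{c \<in> col ` V. col w \<noteq> c} = col ` V - {col w}" for w
    by auto
  then show "\<forall>w\<in>V. card {c \<in> col ` V. col w \<noteq> c} = card (col ` V) - 1"
    using assms by (simp add: card_Diff_singleton)
qed (use assms in auto)

lemma vertex_c_avoiding_connected_iff_reach_in:
  "u \<in> V \<Longrightarrow> vertex_c_avoiding_connected V E col c u v \<longleftrightarrow>
     reach_in E V u v \<and> (col u = c \<or> col v = c \<or> reach_in E (avoiding V col c) u v)"
  by (auto simp: vertex_c_avoiding_connected_def path_within_iff_reach_in)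

lemma vca_connected_iff_reach_in:
  "vca_connected V E col \<longleftrightarrow>
     (\<forall>u\<in>V. \<forall>v\<in>V. reach_in E V u v) \<and>
     (\<forall>c. \<forall>u\<in>avoiding V col c. \<forall>v\<in>avoiding V col c. reach_in E (avoiding V col c) u v)"
  unfolding vca_connected_def by (simp add: vertex_c_avoiding_connected_iff_reach_in) blast

lemma not_vca_connected_if_isolated:
  assumes "u \<in> avoiding V col c" "v \<in> avoiding V col c" "u \<noteq> v"
    and "\<And>z. \<not> adj_in E (avoiding V col c) u z"
  shows "\<not> vca_connected V E col"
proof
  assume "vca_connected V E col"
  then have "reach_in E (avoiding V col c) u v"
    using assms(1,2) unfolding vca_connected_iff_reach_in by blast
  then show False
    using reach_in_from_isolated assms(3,4) by metis
qed

lemma minimal_vca_connected_bridge: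
  assumes "minimal_vca_connected V E col" "{x, y} \<in> E"
  shows "joins (E - {{x, y}}) V x y \<or> (\<exists>c\<in>col ` V. joins (E - {{x, y}}) (avoiding V col c) x y)"
proof -
  have conn: "vca_connected V E col" and lost: "\<not> vca_connected V (E - {{x, y}}) col"
    using assms unfolding minimal_vca_connected_def by auto
  from lost consider
      (whole) u v where "u \<in> V" "v \<in> V" "\<not> reach_in (E - {{x, y}}) V u v"
    | (avoid) c u v where "u \<in> avoiding V col c" "v \<in> avoiding V col c"
        "\<not> reach_in (E - {{x, y}}) (avoiding V col c) u v"
    unfolding vca_connected_iff_reach_in by auto
  then show ?thesis
  proof cases
    case whole
    then have "reach_in E V u v"
      using conn by (simp add: vca_connected_iff_reach_in)
    then show ?thesis
      using joins_if_reach_in_lost[OF _ whole(3)] by blast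
  next
    case avoid
    then have "reach_in E (avoiding V col c) u v"
      using conn by (simp add: vca_connected_iff_reach_in)
    then have joins_c: "joins (E - {{x, y}}) (avoiding V col c) x y"
      using joins_if_reach_in_lost[OF _ avoid(3)] by blast
    show ?thesis
    proof (cases "c \<in> col ` V")
      case False
      then have "avoiding V col c = V"
        by auto
      then show ?thesis
        using joins_c by simp
    qed (use joins_c in blast)
  qed
qed

lemma minimal_vca_connected_bridge_within:
  assumes "minimal_vca_connected V E col" "{x, y} \<in> E" "T \<subseteq> V" "x \<in> T" "y \<in> T"
    and "\<And>c. c \<in> col ` V \<Longrightarrow> x \<in> avoiding V col c \<Longrightarrow> y \<in> avoiding V col c \<Longrightarrow> T \<subseteq> avoiding V col c"
  shows "joins (E - {{x, y}}) T x y"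
proof -
  have "\<exists>T'. T \<subseteq> T' \<and> joins (E - {{x, y}}) T' x y"
    using minimal_vca_connected_bridge[OF assms(1,2)]
  proof
    assume "joins (E - {{x, y}}) V x y"
    then show ?thesis
      using assms(3) by blast
  next
    assume "\<exists>c\<in>col ` V. joins (E - {{x, y}}) (avoiding V col c) x y"
    then obtain c where c: "c \<in> col ` V" "joins (E - {{x, y}}) (avoiding V col c) x y"
      by blast
    then have "T \<subseteq> avoiding V col c"
      using assms(6) by (simp add: joins_def)
    then show ?thesis
      using c(2) by blast
  qed
  then obtain T' where "T \<subseteq> T'" "joins (E - {{x, y}}) T' x y"
    by blast
  from this(2) subset_refl this(1) assms(4,5) show ?thesis
    by (rule joins_mono)
qed

section \<open>The upper bound\<close>

lemma minimal_vca_connected_potential_step: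
  assumes "simple_graph V E" "minimal_vca_connected V E col" "{x, y} \<in> E" "F \<subseteq> E - {{x, y}}"
  shows "1 + card (col ` V) * of_bool (joins F V x y)
    \<le> (\<Sum>c\<in>col ` V. of_bool (joins F (avoiding V col c) x y)) + 3 * of_bool (joins F V x y)"
proof (cases "joins F V x y")
  case True
  have "finite (col ` V)"
    using assms(1) by (simp add: simple_graph_def)
  moreover have "joins F (avoiding V col c) x y" if "c \<in> col ` V - {col x, col y}" for c
    using True that by (intro joins_mono[OF True]) (auto simp: joins_def)
  ultimately have "card (col ` V - {col x, col y}) \<le> (\<Sum>c\<in>col ` V. of_bool (joins F (avoiding V col c) x y))"
    using sum_mono2[of "col ` V" "col ` V - {col x, col y}" "\<lambda>c. of_bool (joins F (avoiding V col c) x y) :: nat"]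
    by simp
  moreover have "card (col ` V) - 2 \<le> card (col ` V - {col x, col y})"
  proof -
    have "card {col x, col y} \<le> 2"
      by (simp add: card_insert_if)
    then show ?thesis
      using diff_card_le_card_Diff[of "{col x, col y}" "col ` V"] by simp
  qed
  ultimately show ?thesis
    using True by simp
next
  case False
  obtain c where c: "c \<in> col ` V" "joins (E - {{x, y}}) (avoiding V col c) x y"
  proof -
    have "x \<in> V" "y \<in> V"
      using assms(1,3) by (auto simp: simple_graph_def)
    then have "\<not> joins (E - {{x, y}}) V x y"
      using False joins_mono[OF _ assms(4)] by blast
    then show ?thesis
      using that minimal_vca_connected_bridge[OF assms(2,3)] by blast
  qed
  then have "joins F (avoiding V col c) x y"
    using joins_mono[OF c(2) assms(4)] by (auto simp: joins_def)
  then have "1 \<le> (\<Sum>c\<in>col ` V. of_bool (joins F (avoiding V col c) x y) :: nat)"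
    using c(1) assms(1) member_le_sum[of c "col ` V" "\<lambda>c. of_bool (joins F (avoiding V col c) x y) :: nat"]
    by (simp add: simple_graph_def)
  then show ?thesis
    using False by simp
qed

(* The potential sum_c r_(V - c)(F) - (k - 3) r_V(F), with its negative part moved to the left so
   that it lives in nat. *)
lemma minimal_vca_connected_potential:
  assumes "simple_graph V E" "minimal_vca_connected V E col" "F \<subseteq> E"
  shows "card F + card (col ` V) * graphic_rank F V
    \<le> (\<Sum>c\<in>col ` V. graphic_rank F (avoiding V col c)) + 3 * graphic_rank F V"
proof -
  have finV: "finite V"
    using assms(1) by (simp add: simple_graph_def)
  have "finite F"
    using assms(1,3) simple_graph_finite_edges finite_subset by blast
  then show ?thesis
    using assms(3)
  proof (induction F rule: finite_induct)
    case (insert e F)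
    have "e \<in> E" "F \<subseteq> E - {e}"
      using insert.prems insert.hyps(2) by auto
    then obtain x y where e: "e = {x, y}" "{x, y} \<in> E" "F \<subseteq> E - {{x, y}}"
      using simple_graph_edge[OF assms(1)] by metis
    have step: "1 + card (col ` V) * of_bool (joins F V x y)
      \<le> (\<Sum>c\<in>col ` V. of_bool (joins F (avoiding V col c) x y)) + 3 * of_bool (joins F V x y)"
      using minimal_vca_connected_potential_step[OF assms(1,2) e(2,3)] .
    have card_insert: "card (insert e F) = card F + 1"
      using insert.hyps by simp
    have rank_V: "graphic_rank (insert e F) V = graphic_rank F V + of_bool (joins F V x y)"
      using finV by (simp add: e(1) graphic_rank_insert_edge)
    have rank_avoiding: "(\<Sum>c\<in>col ` V. graphic_rank (insert e F) (avoiding V col c))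
      = (\<Sum>c\<in>col ` V. graphic_rank F (avoiding V col c))
        + (\<Sum>c\<in>col ` V. of_bool (joins F (avoiding V col c) x y))"
      unfolding e(1) using finV by (simp add: graphic_rank_insert_edge sum.distrib)
    have "card F + card (col ` V) * graphic_rank F V
      \<le> (\<Sum>c\<in>col ` V. graphic_rank F (avoiding V col c)) + 3 * graphic_rank F V"
      using insert.IH insert.prems by blast
    with step show ?case
      unfolding card_insert rank_V rank_avoiding distrib_left by linarith
  qed simp
qed

lemma vca_connected_sum_graphic_rank_avoiding:
  assumes "finite V" "vca_connected V E col" "2 \<le> card (col ` V)"
  shows "(\<Sum>c\<in>col ` V. graphic_rank E (avoiding V col c)) + card (col ` V)
    = (card (col ` V) - 1) * card V"
proof -
  have rank_avoiding: "graphic_rank E (avoiding V col c) + 1 = card (avoiding V col c)"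
    if "c \<in> col ` V" for c
  proof -
    have "\<not> col ` V \<subseteq> {c}"
      using assms(3) card_mono[of "{c}" "col ` V"] by auto
    then have "avoiding V col c \<noteq> {}"
      by auto
    moreover have "graphic_rank E (avoiding V col c) = card (avoiding V col c) - 1"
      using assms(2) calculation by (intro graphic_rank_connected) (auto simp: vca_connected_iff_reach_in)
    ultimately show ?thesis
      using assms(1) by (simp add: card_gt_0_iff)
  qed
  have "(\<Sum>c\<in>col ` V. graphic_rank E (avoiding V col c)) + card (col ` V)
      = (\<Sum>c\<in>col ` V. graphic_rank E (avoiding V col c) + 1)"
    by (simp only: sum.distrib) simp
  also have "\<dots> = (\<Sum>c\<in>col ` V. card (avoiding V col c))"
    by (rule sum.cong[OF refl]) (rule rank_avoiding)
  also have "\<dots> = (card (col ` V) - 1) * card V"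
    using sum_card_avoiding[OF assms(1)] .
  finally show ?thesis .
qed

theorem minimal_vca_connected_card_edges_le:
  assumes "simple_graph V E" "minimal_vca_connected V E col" "2 \<le> card (col ` V)"
  shows "card E + 3 \<le> 2 * card V"
proof -
  define k where "k = card (col ` V)"
  define n where "n = card V"
  have finV: "finite V"
    using assms(1) by (simp add: simple_graph_def)
  have "V \<noteq> {}"
    using assms(3) by auto
  then have n: "1 \<le> n"
    using finV by (simp add: n_def Suc_le_eq card_gt_0_iff)
  have conn: "vca_connected V E col"
    using assms(2) by (simp add: minimal_vca_connected_def)
  have rank_V: "graphic_rank E V = n - 1"
    using conn \<open>V \<noteq> {}\<close> by (simp add: graphic_rank_connected vca_connected_iff_reach_in n_def)
  have "card E + k * (n - 1) \<le> (\<Sum>c\<in>col ` V. graphic_rank E (avoiding V col c)) + 3 * (n - 1)"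
    using minimal_vca_connected_potential[OF assms(1,2) subset_refl]
    unfolding rank_V k_def .
  moreover have "(\<Sum>c\<in>col ` V. graphic_rank E (avoiding V col c)) + k = (k - 1) * n"
    using vca_connected_sum_graphic_rank_avoiding[OF finV conn assms(3)] by (simp add: k_def n_def)
  moreover have "k * (n - 1) + k = (k - 1) * n + n" "3 * (n - 1) + 3 = 3 * n"
    using n assms(3) by (auto simp: k_def algebra_simps diff_mult_distrib2)
  ultimately show ?thesis
    unfolding n_def by linarith
qed

section \<open>One or two colours\<close>

lemma minimal_vca_connected_monochromatic_tree:
  assumes "simple_graph V E" "minimal_vca_connected V E col" "T \<subseteq> V" "T \<noteq> {}"
    and "\<And>w. w \<in> T \<Longrightarrow> col w = d" "\<And>u v. u \<in> T \<Longrightarrow> v \<in> T \<Longrightarrow> reach_in E T u v"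
  shows "card {e \<in> E. e \<subseteq> T} + 1 = card T"
proof -
  have finT: "finite T"
    using assms(1,3) finite_subset by (auto simp: simple_graph_def)
  have "\<exists>x y. e = {x, y} \<and> joins (E - {e}) T x y" if "e \<in> {e \<in> E. e \<subseteq> T}" for e
  proof -
    have "e \<in> E" "e \<subseteq> T"
      using that by auto
    then obtain x y where e: "e = {x, y}" "x \<in> T" "y \<in> T"
      using simple_graph_edge[OF assms(1)] by (metis insert_subset)
    have "joins (E - {e}) T x y"
      unfolding e(1) using that e assms(3,5)
      by (intro minimal_vca_connected_bridge_within[OF assms(2)]) auto
    then show ?thesis
      using e(1) by blast
  qed
  then have "graphic_rank {e \<in> E. e \<subseteq> T} T = card {e \<in> E. e \<subseteq> T}"
    using graphic_rank_add_bridges[OF finT, of "{e \<in> E. e \<subseteq> T}" E "{}"]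
      simple_graph_finite_edges[OF assms(1)] by simp
  moreover have "graphic_rank {e \<in> E. e \<subseteq> T} T = graphic_rank E T"
    by (rule graphic_rank_cong) auto
  moreover have "graphic_rank E T = card T - 1"
    using assms(4,6) by (rule graphic_rank_connected)
  moreover have "0 < card T"
    using finT assms(4) by (simp add: card_gt_0_iff)
  ultimately show ?thesis
    by simp
qed

lemma minimal_vca_connected_one_colour:
  assumes "simple_graph V E" "minimal_vca_connected V E col" "col ` V = {d}"
  shows "card E + 1 = card V"
proof -
  have "card {e \<in> E. e \<subseteq> V} + 1 = card V"
  proof (rule minimal_vca_connected_monochromatic_tree[OF assms(1,2) subset_refl])
    show "V \<noteq> {}" "\<And>w. w \<in> V \<Longrightarrow> col w = d"
      using assms(3) by auto
    show "\<And>u v. u \<in> V \<Longrightarrow> v \<in> V \<Longrightarrow> reach_in E V u v"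
      using assms(2) by (simp add: minimal_vca_connected_def vca_connected_iff_reach_in)
  qed
  moreover have "{e \<in> E. e \<subseteq> V} = E"
    using assms(1) by (auto simp: simple_graph_def)
  ultimately show ?thesis
    by simp
qed

lemma minimal_vca_connected_two_colours_crossing:
  assumes "simple_graph V E" "minimal_vca_connected V E col" "col ` V = {a, b}" "a \<noteq> b"
  defines "A \<equiv> {w \<in> V. col w = a}" and "B \<equiv> {w \<in> V. col w = b}"
  shows "card (E - {e. e \<subseteq> A} - {e. e \<subseteq> B}) \<le> 1"
proof -
  let ?inner = "{e \<in> E. e \<subseteq> A} \<union> {e \<in> E. e \<subseteq> B}" and ?cross = "E - {e. e \<subseteq> A} - {e. e \<subseteq> B}"
  have conn: "vca_connected V E col"
    using assms(2) by (simp add: minimal_vca_connected_def)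
  then have conn_avoiding: "\<forall>c. \<forall>u\<in>avoiding V col c. \<forall>v\<in>avoiding V col c. reach_in E (avoiding V col c) u v"
    by (simp add: vca_connected_iff_reach_in)
  have "A = avoiding V col b" "B = avoiding V col a"
    using assms(3,4) by (auto simp: A_def B_def)
  moreover obtain a0 b0 where "a0 \<in> A" "b0 \<in> B"
    using assms(3) by (force simp: A_def B_def)
  moreover have "A \<union> B = V"
    using assms(3) by (auto simp: A_def B_def)
  ultimately have "card V - 2 \<le> graphic_rank ?inner V"
    using conn_avoiding by (intro graphic_rank_two_parts) auto
  moreover have "graphic_rank E V = card V - 1"
    using conn \<open>a0 \<in> A\<close> by (intro graphic_rank_connected) (auto simp: A_def vca_connected_iff_reach_in)
  moreover have "graphic_rank (?inner \<union> ?cross) V = graphic_rank ?inner V + card ?cross"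
  proof (rule graphic_rank_add_bridges)
    fix e assume e: "e \<in> ?cross"
    then obtain x y where xy: "e = {x, y}" "x \<in> V" "y \<in> V"
      using simple_graph_edge[OF assms(1)] by blast
    then have "joins (E - {{x, y}}) V x y"
      using e assms(3) by (intro minimal_vca_connected_bridge_within[OF assms(2)]) (auto simp: A_def B_def)
    then show "\<exists>x y. e = {x, y} \<and> joins (E - {e}) V x y"
      using xy(1) by blast
  qed (use assms(1) simple_graph_finite_edges in \<open>auto simp: simple_graph_def\<close>)
  moreover have "?inner \<union> ?cross = E"
    by blast
  ultimately show ?thesis
    by simp
qed

lemma minimal_vca_connected_colour_class_tree:
  assumes "simple_graph V E" "minimal_vca_connected V E col" "col ` V = {d, d'}" "d \<noteq> d'"
  shows "card {e \<in> E. e \<subseteq> {w \<in> V. col w = d}} + 1 = card {w \<in> V. col w = d}"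
proof (rule minimal_vca_connected_monochromatic_tree[OF assms(1,2)])
  have "{w \<in> V. col w = d} = avoiding V col d'"
    using assms(3,4) by auto
  then show "\<And>u v. u \<in> {w \<in> V. col w = d} \<Longrightarrow> v \<in> {w \<in> V. col w = d} \<Longrightarrow>
      reach_in E {w \<in> V. col w = d} u v"
    using assms(2) by (simp add: minimal_vca_connected_def vca_connected_iff_reach_in)
  have "d \<in> col ` V"
    using assms(3) by simp
  then show "{w \<in> V. col w = d} \<noteq> {}"
    by auto
qed auto

theorem minimal_vca_connected_two_colours:
  assumes "simple_graph V E" "minimal_vca_connected V E col" "card (col ` V) = 2"
  shows "card E + 1 = card V"
proof -
  obtain a b where ab: "col ` V = {a, b}" "a \<noteq> b"
    using assms(3) by (meson card_2_iff)
  define A where "A = {w \<in> V. col w = a}"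
  define B where "B = {w \<in> V. col w = b}"
  let ?EA = "{e \<in> E. e \<subseteq> A}" and ?EB = "{e \<in> E. e \<subseteq> B}" and ?cross = "E - {e. e \<subseteq> A} - {e. e \<subseteq> B}"
  have "card E = card (?EA \<union> ?EB \<union> ?cross)"
    by (rule arg_cong[where f = card]) blast
  also have "\<dots> \<le> card (?EA \<union> ?EB) + card ?cross"
    by (rule card_Un_le)
  finally have "card E \<le> card ?EA + card ?EB + card ?cross"
    using card_Un_le[of ?EA ?EB] by linarith
  moreover have "card {e \<in> E. e \<subseteq> A} + 1 = card A"
    unfolding A_def using ab by (rule minimal_vca_connected_colour_class_tree[OF assms(1,2)])
  moreover have "col ` V = {b, a}"
    using ab(1) by auto
  then have "card {e \<in> E. e \<subseteq> B} + 1 = card B"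
    unfolding B_def using ab(2)[symmetric] by (rule minimal_vca_connected_colour_class_tree[OF assms(1,2)])
  moreover have "card A + card B = card V"
  proof -
    have "A \<union> B = V" "A \<inter> B = {}"
      using ab by (auto simp: A_def B_def)
    moreover have "finite A" "finite B"
      using assms(1) by (simp_all add: simple_graph_def A_def B_def)
    ultimately show ?thesis
      using card_Un_disjoint[of A B] by simp
  qed
  moreover have "card V \<le> card E + 1"
  proof (rule card_edges_ge_if_connected[OF assms(1)])
    show "V \<noteq> {}"
      using ab(1) by auto
    show "\<And>u v. u \<in> V \<Longrightarrow> v \<in> V \<Longrightarrow> reach_in E V u v"
      using assms(2) by (simp add: minimal_vca_connected_def vca_connected_iff_reach_in)
  qed
  ultimately show ?thesis
    using minimal_vca_connected_two_colours_crossing[OF assms(1,2) ab] unfolding A_def B_def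
    by linarith
qed

lemma minimal_vca_connected_few_colours:
  assumes "simple_graph V E" "minimal_vca_connected V E col" "card (col ` V) \<in> {1, 2}"
  shows "card E + 1 = card V"
proof (cases "card (col ` V) = 1")
  case True
  then obtain d where "col ` V = {d}"
    by (meson card_1_singletonE)
  then show ?thesis
    by (rule minimal_vca_connected_one_colour[OF assms(1,2)])
next
  case False
  then have "card (col ` V) = 2"
    using assms(3) by simp
  then show ?thesis
    by (rule minimal_vca_connected_two_colours[OF assms(1,2)])
qed

section \<open>Sharpness\<close>

(* K_(1,1,n-2): the hubs 0 and 1 are adjacent to each other and to every other vertex; the
   colouring min x 2 colours it by its three parts. *)
definition tripartite_edges :: "nat \<Rightarrow> nat set set" where
  "tripartite_edges n = {{i, x} | i x. i < 2 \<and> i < x \<and> x < n}"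

lemma card_tripartite_edges:
  assumes "2 \<le> n"
  shows "card (tripartite_edges n) = 2 * n - 3"
proof -
  let ?P = "{(i, x). i < 2 \<and> i < x \<and> x < (n::nat)}"
  have P: "?P = {0} \<times> {1..<n} \<union> {1} \<times> {2..<n}"
    by auto
  have "tripartite_edges n = (\<lambda>(i, x). {i, x}) ` ?P"
    by (auto simp: tripartite_edges_def)
  moreover have "inj_on (\<lambda>(i, x). {i, x}) ?P"
  proof (rule inj_onI, clarify)
    fix i x j y :: nat
    assume "i < x" "j < y" "{i, x} = {j, y}"
    then show "i = j \<and> x = y"
      unfolding doubleton_eq_iff by auto
  qed
  moreover have "card ?P = (n - 1) + (n - 2)"
    unfolding P by (subst card_Un_disjoint) auto
  ultimately show ?thesis
    using assms by (simp add: card_image)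
qed

lemma tripartite_edge_hub:
  assumes "i < 2" "i < n" "w < n" "w \<noteq> i"
  shows "{i, w} \<in> tripartite_edges n"
proof (cases "i < w")
  case True
  then show ?thesis
    unfolding tripartite_edges_def using assms by (intro CollectI exI[of _ i] exI[of _ w]) simp
next
  case False
  then have "i = 1" "w = 0"
    using assms by auto
  then show ?thesis
    unfolding tripartite_edges_def using assms by (intro CollectI exI[of _ 0] exI[of _ 1]) auto
qed

lemma tripartite_edge_cases:
  assumes "{u, v} \<in> tripartite_edges n"
  shows "u \<noteq> v" "2 \<le> v \<Longrightarrow> u < 2"
proof -
  obtain i x where "i < 2" "i < x" "{u, v} = {i, x}"
    using assms unfolding tripartite_edges_def by blast
  then show "u \<noteq> v" "2 \<le> v \<Longrightarrow> u < 2"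
    unfolding doubleton_eq_iff by auto
qed

lemma simple_graph_tripartite: "simple_graph {0..<n} (tripartite_edges n)"
  by (auto simp: simple_graph_def tripartite_edges_def)

lemma vca_connected_tripartite:
  assumes "2 \<le> n"
  shows "vca_connected {0..<n} (tripartite_edges n) (\<lambda>x. min x 2)"
proof -
  have hub: "reach_in (tripartite_edges n) T u v"
    if "T \<subseteq> {0..<n}" "h \<in> T" "h < 2" "u \<in> T" "v \<in> T" for T h u v
  proof (rule reach_in_hub[OF that(2) _ that(4,5)])
    fix w assume "w \<in> T" "w \<noteq> h"
    then show "{h, w} \<in> tripartite_edges n"
      using that(1-3) by (intro tripartite_edge_hub) auto
  qed
  show ?thesis
    unfolding vca_connected_iff_reach_in
  proof (intro conjI allI ballI)
    show "reach_in (tripartite_edges n) {0..<n} u v" if "u \<in> {0..<n}" "v \<in> {0..<n}" for u v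
      using that assms by (intro hub[of _ 0]) auto
    fix c u v
    assume "u \<in> avoiding {0..<n} (\<lambda>x. min x 2) c" "v \<in> avoiding {0..<n} (\<lambda>x. min x 2) c"
    then show "reach_in (tripartite_edges n) (avoiding {0..<n} (\<lambda>x. min x 2) c) u v"
      using assms by (cases "c = 0") (auto intro: hub[of _ 1] hub[of _ 0])
  qed
qed

lemma tripartite_edge_critical:
  assumes "e \<in> tripartite_edges n"
  shows "\<not> vca_connected {0..<n} (tripartite_edges n - {e}) (\<lambda>x. min x 2)"
proof -
  obtain i x where e: "e = {i, x}" "i < 2" "i < x" "x < n"
    using assms unfolding tripartite_edges_def by blast
  show ?thesis
  proof (cases "x = 1")
    case True
    then have "i = 0"
      using e by simp
    show ?thesis
    proof (rule not_vca_connected_if_isolated[of 0 _ _ 2 1])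
      fix z
      show "\<not> adj_in (tripartite_edges n - {e}) (avoiding {0..<n} (\<lambda>x. min x 2) 2) 0 z"
        using tripartite_edge_cases(1)[of 0 z n] e True \<open>i = 0\<close>
        by (auto simp: adj_in_def min_def split: if_splits)
    qed (use e True in auto)
  next
    case False
    have "i \<noteq> 1 - i"
      using e(2) by arith
    show ?thesis
    proof (rule not_vca_connected_if_isolated[of x _ _ "1 - i" i])
      fix z
      show "\<not> adj_in (tripartite_edges n - {e}) (avoiding {0..<n} (\<lambda>x. min x 2) (1 - i)) x z"
        using tripartite_edge_cases(2)[of z x n] e False
        by (auto simp: adj_in_def insert_commute min_def split: if_splits)
    qed (use e False \<open>i \<noteq> 1 - i\<close> in \<open>auto simp: min_def\<close>)
  qed
qed

lemma image_min_2_atLeastLessThan: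
  assumes "3 \<le> n"
  shows "(\<lambda>x. min x 2) ` {0..<n} = {0, 1, 2 :: nat}"
proof
  have "min 0 2 \<in> (\<lambda>x. min x 2) ` {0..<n}" "min 1 2 \<in> (\<lambda>x. min x 2) ` {0..<n}"
    "min 2 2 \<in> (\<lambda>x. min x (2::nat)) ` {0..<n}"
    using assms by (intro imageI; simp)+
  then show "{0, 1, 2} \<subseteq> (\<lambda>x. min x 2) ` {0..<n}"
    by simp
  have "min x 2 \<in> {0, 1, 2 :: nat}" for x :: nat
    by (auto simp: min_def)
  then show "(\<lambda>x. min x 2) ` {0..<n} \<subseteq> {0, 1, 2}"
    by (simp add: image_subset_iff)
qed

theorem corollary3p15:
  shows "(\<forall>(V::'a set) E (col::'a \<Rightarrow> 'b).
            simple_graph V E \<and> card V \<ge> 2 \<and> minimal_vca_connected V E col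
            \<longrightarrow> card E \<le> 2 * card V - 3)
       \<and> (\<forall>n::nat. n \<ge> 3 \<longrightarrow>
            (\<exists>(V::nat set) E (col::nat \<Rightarrow> nat).
               simple_graph V E \<and> card V = n \<and> card (col ` V) = 3 \<and>
               minimal_vca_connected V E col \<and> card E = 2 * n - 3))
       \<and> (\<forall>(V::'a set) E (col::'a \<Rightarrow> 'b).
            simple_graph V E \<and> card V \<ge> 2 \<and> minimal_vca_connected V E col \<and>
            card (col ` V) \<in> {1, 2}
            \<longrightarrow> card E = card V - 1)"
proof (intro conjI allI impI)
  fix V :: "'a set" and E and col :: "'a \<Rightarrow> 'b"
  assume H: "simple_graph V E \<and> card V \<ge> 2 \<and> minimal_vca_connected V E col"
  show "card E \<le> 2 * card V - 3"
  proof (cases "2 \<le> card (col ` V)")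
    case True
    then show ?thesis
      using minimal_vca_connected_card_edges_le[of V E col] H by simp
  next
    case False
    have "col ` V \<noteq> {}" "finite (col ` V)"
      using H by (auto simp: simple_graph_def)
    then have "0 < card (col ` V)"
      by (simp add: card_gt_0_iff)
    with False have "card (col ` V) \<in> {1, 2}"
      by simp
    then show ?thesis
      using minimal_vca_connected_few_colours[of V E col] H by simp
  qed
next
  fix n :: nat
  assume "3 \<le> n"
  then show "\<exists>(V::nat set) E (col::nat \<Rightarrow> nat). simple_graph V E \<and> card V = n \<and>
      card (col ` V) = 3 \<and> minimal_vca_connected V E col \<and> card E = 2 * n - 3"
    using simple_graph_tripartite vca_connected_tripartite tripartite_edge_critical
      card_tripartite_edges image_min_2_atLeastLessThan
    by (intro exI[of _ "{0..<n}"] exI[of _ "tripartite_edges n"] exI[of _ "\<lambda>x. min x 2"])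
      (simp add: minimal_vca_connected_def)
next
  fix V :: "'a set" and E and col :: "'a \<Rightarrow> 'b"
  assume "simple_graph V E \<and> card V \<ge> 2 \<and> minimal_vca_connected V E col \<and> card (col ` V) \<in> {1, 2}"
  then show "card E = card V - 1"
    using minimal_vca_connected_few_colours[of V E col] by simp
qed

end
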